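(* Let $f\in L^p(\mathbb{R}^d)$ be an extremizer for $\mathcal{E}$, i.e. $f\neq0$ and $\|\mathcal{E}f\|_q=A_p\|f\|_p$, and let $(\tau_0,\xi_0)\in\mathbb{R}\times\mathbb{R}^d$. For $\lambda>0$ set $f_\lambda(\xi)=\lambda^{d/p}f(\lambda\xi)$. Then \[ \lim_{\lambda\to0}\frac{\|\mathcal{E}f_\lambda+\mathcal{E}_{(\tau_0,\xi_0)}f_\lambda\|_q}{2^{1/p}\|f\|_p}=2^{1/p'}A_p. \]
   Context: Fix $d\in\mathbb{N}$, $p,q$ with $q>p$, $q=\frac{d+2}{d}p'$, $1/p+1/p'=1$. $\mathcal{E}f(t,x)=\int_{\mathbb{R}^d} e^{i(t|\xi|^2+x\cdot\xi)}f(\xi)\,d\xi$, $\mathcal{E}_{(\tau_0,\xi_0)}g(t,x)=\int_{\mathbb{R}^d} e^{i(t(|\xi-\xi_0|^2+\tau_0)+x\cdot\xi)}g(\xi)\,d\xi$, and $A_p=\sup_{f\neq0}\|\mathcal{E}f\|_q/\|f\|_p<\infty$. Note $(\|f_\lambda\|_p^p+\|f_\lambda\|_p^p)^{1/p}=2^{1/p}\|f\|_p$. *)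

theory Defs
  imports "HOL-Analysis.Analysis"
begin

definition lpnorm :: "real \<Rightarrow> ('b::euclidean_space \<Rightarrow> complex) \<Rightarrow> ennreal" where
  "lpnorm r g =
     (let I = (\<integral>\<^sup>+ z. ennreal (norm (g z) powr r) \<partial>lborel)
      in if I = \<infinity> then \<infinity> else ennreal (enn2real I powr (1 / r)))"

definition in_Lp :: "real \<Rightarrow> ('b::euclidean_space \<Rightarrow> complex) \<Rightarrow> bool" where
  "in_Lp r g \<longleftrightarrow> g \<in> borel_measurable lborel \<and>
     (\<integral>\<^sup>+ z. ennreal (norm (g z) powr r) \<partial>lborel) < \<infinity>"

definition ext_op :: "('a::euclidean_space \<Rightarrow> complex) \<Rightarrow> real \<times> 'a \<Rightarrow> complex" where
  "ext_op g = (\<lambda>(t, x). \<integral> \<xi>. exp (\<i> * complex_of_real (t * (norm \<xi>)\<^sup>2 + inner x \<xi>)) * g \<xi> \<partial>lborel)"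

definition ext_op_shift :: "real \<Rightarrow> 'a::euclidean_space \<Rightarrow> ('a \<Rightarrow> complex) \<Rightarrow> real \<times> 'a \<Rightarrow> complex" where
  "ext_op_shift \<tau>0 \<xi>0 g = (\<lambda>(t, x). \<integral> \<xi>.
      exp (\<i> * complex_of_real (t * ((norm (\<xi> - \<xi>0))\<^sup>2 + \<tau>0) + inner x \<xi>)) * g \<xi> \<partial>lborel)"

text \<open>Truncation of g to the closed ball of radius R (an L^1 function if g is in L^p, p>1).\<close>
definition trunc :: "real \<Rightarrow> ('a::euclidean_space \<Rightarrow> complex) \<Rightarrow> 'a \<Rightarrow> complex" where
  "trunc R g = (\<lambda>\<xi>. if norm \<xi> \<le> R then g \<xi> else 0)"

text \<open>L^q norm of T g for g in L^p, where T is defined on L^p by the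
  standard density extension: T g is the L^q limit of T applied to the
  truncations of g, so its norm is the limit of the norms.\<close>
definition ext_norm :: "real \<Rightarrow> (('a::euclidean_space \<Rightarrow> complex) \<Rightarrow> real \<times> 'a \<Rightarrow> complex)
     \<Rightarrow> ('a \<Rightarrow> complex) \<Rightarrow> ennreal" where
  "ext_norm q T g = Lim at_top (\<lambda>R::real. lpnorm q (T (trunc R g)))"

definition A_const :: "real \<Rightarrow> real \<Rightarrow> 'a::euclidean_space itself \<Rightarrow> ennreal" where
  "A_const p q _ = (SUP g \<in> {g :: 'a \<Rightarrow> complex. in_Lp p g \<and> lpnorm p g \<noteq> 0}.
       ext_norm q ext_op g / lpnorm p g)"

end

theory Submission
  imports Defs
begin

text \<open>
  The parabolic rescaling \<open>(t, x) \<mapsto> (t / \<lambda>\<^sup>2, x / \<lambda>)\<close> turns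
  \<open>E f_\<lambda> + E_(\<tau>0,\<xi>0) f_\<lambda>\<close> into \<open>u + G_\<lambda> u\<close>, where \<open>u = E f\<close> and
  \<open>G_\<lambda> u (s, y) = exp (i \<lambda>\<^sup>2 \<theta> s) u (s, y - 2 \<lambda> s \<xi>0)\<close>, \<open>\<theta> = |\<xi>0|\<^sup>2 + \<tau>0\<close>,
  is a Galilean boost; the relation \<open>q = (d + 2) / d * p'\<close> is exactly what makes the
  \<open>L^q\<close> norm invariant under this rescaling. Since \<open>G_\<lambda>\<close> is an \<open>L^q\<close> isometry,
  \<open>\<parallel>u + G_\<lambda> u\<parallel>_q \<le> 2 \<parallel>u\<parallel>_q\<close>; since \<open>G_\<lambda> u \<rightarrow> u\<close> pointwise as
  \<open>\<lambda> \<rightarrow> 0\<close>, Fatou's lemma gives the reverse inequality in the limit. Hence the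
  numerator tends to \<open>2 \<parallel>E f\<parallel>_q = 2 A_p \<parallel>f\<parallel>_p\<close>, and \<open>2 / 2^(1/p) = 2^(1/p')\<close>.

  As \<open>E f\<close> is only defined through the truncations of \<open>f\<close>, the argument is run on
  the truncations, uniformly in \<open>\<lambda>\<close>: by the bound \<open>A_p\<close>, the error is at most a
  multiple of the \<open>L^p\<close> norm of the tail of \<open>f\<close>.
\<close>

section \<open>\<open>L^r\<close> norms\<close>

text \<open>Real-valued counterparts of \<open>lpnorm\<close>; they are meaningful only for \<open>in_Lp\<close>
  functions, since the Bochner integral of a non-integrable function is \<open>0\<close>.\<close>

definition Lp_integral :: "real \<Rightarrow> ('b::euclidean_space \<Rightarrow> complex) \<Rightarrow> real" where
  "Lp_integral r g = (\<integral>z. norm (g z) powr r \<partial>lborel)"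

definition Lp_norm :: "real \<Rightarrow> ('b::euclidean_space \<Rightarrow> complex) \<Rightarrow> real" where
  "Lp_norm r g = Lp_integral r g powr (1 / r)"

lemma Lp_integral_nonneg: "0 \<le> Lp_integral r g"
  unfolding Lp_integral_def by (rule integral_nonneg_AE) auto

lemma Lp_norm_nonneg: "0 \<le> Lp_norm r g"
  unfolding Lp_norm_def by simp

lemma Lp_integral_eq_Lp_norm_powr: "0 < r \<Longrightarrow> Lp_integral r g = Lp_norm r g powr r"
  unfolding Lp_norm_def using Lp_integral_nonneg[of r g] by (simp add: powr_powr)

lemma in_Lp_iff:
  "in_Lp r g \<longleftrightarrow> g \<in> borel_measurable lborel \<and> integrable lborel (\<lambda>z. norm (g z) powr r)"
proof (cases "g \<in> borel_measurable lborel")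
  case True
  then have "(\<lambda>z. norm (g z) powr r) \<in> borel_measurable lborel" by measurable
  then show ?thesis unfolding in_Lp_def integrable_iff_bounded by simp
qed (simp add: in_Lp_def)

lemma in_Lp_measurable: "in_Lp r g \<Longrightarrow> g \<in> borel_measurable lborel"
  by (simp add: in_Lp_def)

lemma in_Lp_integrable: "in_Lp r g \<Longrightarrow> integrable lborel (\<lambda>z. norm (g z) powr r)"
  by (simp add: in_Lp_iff)

lemma nn_integral_eq_Lp_integral:
  "in_Lp r g \<Longrightarrow> (\<integral>\<^sup>+ z. ennreal (norm (g z) powr r) \<partial>lborel) = ennreal (Lp_integral r g)"
  unfolding Lp_integral_def by (rule nn_integral_eq_integral) (auto simp: in_Lp_integrable)

lemma lpnorm_eq_Lp_norm: "in_Lp r g \<Longrightarrow> lpnorm r g = ennreal (Lp_norm r g)"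
  unfolding lpnorm_def Lp_norm_def Let_def
  using nn_integral_eq_Lp_integral[of r g] Lp_integral_nonneg[of r g] by simp

lemma lpnorm_cong_nn_integral:
  "(\<integral>\<^sup>+z. ennreal (norm (u z) powr r) \<partial>lborel) = (\<integral>\<^sup>+z. ennreal (norm (v z) powr r) \<partial>lborel)
    \<Longrightarrow> lpnorm r u = lpnorm r v"
  unfolding lpnorm_def by simp

lemma
  assumes u: "u \<in> borel_measurable lborel" and v: "in_Lp r v"
    and eq: "(\<integral>\<^sup>+z. ennreal (norm (u z) powr r) \<partial>lborel) = (\<integral>\<^sup>+z. ennreal (norm (v z) powr r) \<partial>lborel)"
  shows in_Lp_nn_integral_eq: "in_Lp r u"
    and Lp_norm_nn_integral_eq: "Lp_norm r u = Lp_norm r v"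
proof -
  show u_Lp: "in_Lp r u" using u v eq unfolding in_Lp_def by simp
  have "ennreal (Lp_integral r u) = ennreal (Lp_integral r v)"
    using eq by (simp add: nn_integral_eq_Lp_integral[OF u_Lp] nn_integral_eq_Lp_integral[OF v])
  then show "Lp_norm r u = Lp_norm r v"
    unfolding Lp_norm_def using Lp_integral_nonneg[of r u] Lp_integral_nonneg[of r v] by simp
qed

lemma Lp_norm_eq_0_AE:
  assumes "in_Lp r g" "Lp_norm r g = 0" "0 < r"
  shows "AE z in lborel. g z = 0"
proof -
  have "Lp_integral r g = 0" using assms(2,3) by (simp add: Lp_integral_eq_Lp_norm_powr)
  then have "AE z in lborel. norm (g z) powr r = 0"
    using in_Lp_integrable[OF assms(1)] unfolding Lp_integral_def
    by (subst integral_nonneg_eq_0_iff_AE[symmetric]) auto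
  then show ?thesis by eventually_elim simp
qed

lemma Lp_norm_cong_AE:
  assumes "in_Lp r g" "h \<in> borel_measurable lborel" "AE z in lborel. g z = h z"
  shows "Lp_norm r h = Lp_norm r g"
proof -
  have "AE z in lborel. norm (h z) powr r = norm (g z) powr r"
    using assms(3) by eventually_elim simp
  moreover have "(\<lambda>z. norm (h z) powr r) \<in> borel_measurable lborel" using assms(2) by measurable
  ultimately have "Lp_integral r h = Lp_integral r g"
    unfolding Lp_integral_def using borel_measurable_integrable[OF in_Lp_integrable[OF assms(1)]]
    by (intro integral_cong_AE) auto
  then show ?thesis by (simp add: Lp_norm_def)
qed

lemma
  assumes "in_Lp r v" "u \<in> borel_measurable lborel" "\<And>z. norm (u z) \<le> norm (v z)" "0 < r"
  shows in_Lp_mono: "in_Lp r u" and Lp_norm_mono: "Lp_norm r u \<le> Lp_norm r v"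
proof -
  have le: "norm (u z) powr r \<le> norm (v z) powr r" for z
    using assms(3,4) by (intro powr_mono2) auto
  have "(\<lambda>z. norm (u z) powr r) \<in> borel_measurable lborel" using assms(2) by measurable
  with in_Lp_integrable[OF assms(1)] have u_int: "integrable lborel (\<lambda>z. norm (u z) powr r)"
    by (rule Bochner_Integration.integrable_bound) (simp add: le AE_I2)
  then show "in_Lp r u" using assms(2) by (simp add: in_Lp_iff)
  have "Lp_integral r u \<le> Lp_integral r v"
    unfolding Lp_integral_def using u_int in_Lp_integrable[OF assms(1)] le by (intro integral_mono) auto
  then show "Lp_norm r u \<le> Lp_norm r v"
    unfolding Lp_norm_def using Lp_integral_nonneg[of r u] assms(4) by (intro powr_mono2) auto
qed

lemma
  assumes "in_Lp r u" "0 < r"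
  shows in_Lp_cmult: "in_Lp r (\<lambda>z. c * u z)"
    and Lp_norm_cmult: "Lp_norm r (\<lambda>z. c * u z) = norm c * Lp_norm r u"
proof -
  have eq: "norm (c * u z) powr r = norm c powr r * norm (u z) powr r" for z
    by (simp add: norm_mult powr_mult)
  have "(\<lambda>z. c * u z) \<in> borel_measurable lborel" using in_Lp_measurable[OF assms(1)] by measurable
  then show "in_Lp r (\<lambda>z. c * u z)" unfolding in_Lp_iff eq using in_Lp_integrable[OF assms(1)] by auto
  have "Lp_integral r (\<lambda>z. c * u z) = norm c powr r * Lp_integral r u" unfolding Lp_integral_def eq by simp
  then show "Lp_norm r (\<lambda>z. c * u z) = norm c * Lp_norm r u"
    unfolding Lp_norm_def using Lp_integral_nonneg[of r u] assms(2) by (simp add: powr_mult powr_powr)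
qed

lemma powr_convex_combination:
  fixes t x y r :: real
  assumes "0 \<le> t" "t \<le> 1" "0 \<le> x" "0 \<le> y" "1 \<le> r"
  shows "((1 - t) * x + t * y) powr r \<le> (1 - t) * x powr r + t * y powr r"
proof -
  have powr_le_self: "s powr r \<le> s" if "0 \<le> s" "s \<le> 1" for s :: real
    using that assms(5) powr_mono'[of 1 r s] by simp
  consider "x = 0" | "y = 0" | "0 < x" "0 < y" using assms(3,4) by linarith
  then show ?thesis
  proof cases
    case 1
    then have "((1 - t) * x + t * y) powr r = t powr r * y powr r"
      using assms by (simp add: powr_mult)
    also have "\<dots> \<le> t * y powr r" using powr_le_self[of t] assms by (intro mult_right_mono) auto
    finally show ?thesis using 1 assms by simp
  next
    case 2
    then have "((1 - t) * x + t * y) powr r = (1 - t) powr r * x powr r"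
      using assms by (simp add: powr_mult)
    also have "\<dots> \<le> (1 - t) * x powr r" using powr_le_self[of "1 - t"] assms by (intro mult_right_mono) auto
    finally show ?thesis using 2 assms by simp
  next
    case 3
    then show ?thesis using assms convex_onD[OF powr_convex[OF assms(5)], of t x y] by simp
  qed
qed

lemma norm_add_powr_le:
  fixes a b :: "'a::real_normed_vector"
  assumes "0 \<le> r"
  shows "norm (a + b) powr r \<le> 2 powr r * (norm a powr r + norm b powr r)"
proof -
  define m where "m = max (norm a) (norm b)"
  have "norm (a + b) \<le> 2 * m"
    using norm_triangle_ineq[of a b] unfolding m_def by linarith
  then have "norm (a + b) powr r \<le> 2 powr r * m powr r"
    using assms by (subst powr_mult[symmetric]) (auto intro: powr_mono2)
  also have "m powr r \<le> norm a powr r + norm b powr r"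
    unfolding m_def by (cases "norm a \<le> norm b") (auto simp: max_def)
  finally show ?thesis by (simp add: mult_left_mono)
qed

lemma in_Lp_add:
  assumes r: "0 \<le> r" and u: "in_Lp r u" and v: "in_Lp r v"
  shows "in_Lp r (\<lambda>z. u z + v z)"
proof -
  have m: "(\<lambda>z. u z + v z) \<in> borel_measurable lborel"
    using in_Lp_measurable[OF u] in_Lp_measurable[OF v] by measurable
  have "integrable lborel (\<lambda>z. 2 powr r * (norm (u z) powr r + norm (v z) powr r))"
    using in_Lp_integrable[OF u] in_Lp_integrable[OF v] by simp
  moreover have "(\<lambda>z. norm (u z + v z) powr r) \<in> borel_measurable lborel" using m by measurable
  ultimately have "integrable lborel (\<lambda>z. norm (u z + v z) powr r)"
    by (rule Bochner_Integration.integrable_bound) (simp add: AE_I2 norm_add_powr_le[OF r])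
  with m show ?thesis by (simp add: in_Lp_iff)
qed

lemma Lp_norm_triangle:
  assumes r: "1 \<le> r" and u: "in_Lp r u" and v: "in_Lp r v"
  shows "Lp_norm r (\<lambda>z. u z + v z) \<le> Lp_norm r u + Lp_norm r v"
proof -
  have r0: "0 < r" using r by simp
  have w_meas: "(\<lambda>z. u z + v z) \<in> borel_measurable lborel"
    using in_Lp_measurable[OF u] in_Lp_measurable[OF v] by measurable
  define a b where "a = Lp_norm r u" and "b = Lp_norm r v"
  consider "a = 0" | "b = 0" | "0 < a" "0 < b"
    unfolding a_def b_def using Lp_norm_nonneg[of r u] Lp_norm_nonneg[of r v] by linarith
  then show ?thesis
  proof cases
    case 1
    then have "AE z in lborel. v z = u z + v z"
      using Lp_norm_eq_0_AE[OF u _ r0] unfolding a_def b_def by (auto elim: AE_mp)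
    then show ?thesis using 1 Lp_norm_cong_AE[OF v w_meas] unfolding a_def b_def by simp
  next
    case 2
    then have "AE z in lborel. u z = u z + v z"
      using Lp_norm_eq_0_AE[OF v _ r0] unfolding a_def b_def by (auto elim: AE_mp)
    then show ?thesis using 2 Lp_norm_cong_AE[OF u w_meas] unfolding a_def b_def by simp
  next
    case 3
    define t where "t = b / (a + b)"
    have t: "0 \<le> t" "t \<le> 1" "1 - t = a / (a + b)" using 3 by (auto simp: t_def field_simps)
    \<comment> \<open>Convexity of \<open>x powr r\<close>, applied to the normalised functions \<open>u / a\<close> and \<open>v / b\<close>.\<close>
    have pointwise: "norm (u z + v z) powr r \<le>
        (a + b) powr r * ((1 - t) / a powr r * norm (u z) powr r + t / b powr r * norm (v z) powr r)" for z
    proof -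
      have "norm (u z + v z) powr r \<le> (norm (u z) + norm (v z)) powr r"
        using r0 by (intro powr_mono2) (auto simp: norm_triangle_ineq)
      also have "norm (u z) + norm (v z) = (a + b) * ((1 - t) * (norm (u z) / a) + t * (norm (v z) / b))"
      proof -
        have "(1 - t) * (norm (u z) / a) = norm (u z) / (a + b)" using 3 by (simp add: t(3))
        moreover have "t * (norm (v z) / b) = norm (v z) / (a + b)" using 3 by (simp add: t_def)
        ultimately show ?thesis using 3 by (simp add: add_divide_distrib[symmetric])
      qed
      also have "\<dots> powr r = (a + b) powr r * ((1 - t) * (norm (u z) / a) + t * (norm (v z) / b)) powr r"
        using 3 t by (subst powr_mult) auto
      also have "\<dots> \<le> (a + b) powr r * ((1 - t) * (norm (u z) / a) powr r + t * (norm (v z) / b) powr r)"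
        using powr_convex_combination[of t "norm (u z) / a" "norm (v z) / b" r] r t 3
        by (intro mult_left_mono) auto
      also have "\<dots> = (a + b) powr r * ((1 - t) / a powr r * norm (u z) powr r + t / b powr r * norm (v z) powr r)"
        using 3 by (simp add: powr_divide)
      finally show ?thesis .
    qed
    have "Lp_integral r (\<lambda>z. u z + v z)
        \<le> (\<integral>z. (a + b) powr r * ((1 - t) / a powr r * norm (u z) powr r + t / b powr r * norm (v z) powr r) \<partial>lborel)"
      unfolding Lp_integral_def using in_Lp_integrable[OF in_Lp_add[OF _ u v]] r0
        in_Lp_integrable[OF u] in_Lp_integrable[OF v] pointwise
      by (intro integral_mono) auto
    also have "\<dots> = (a + b) powr r * ((1 - t) / a powr r * Lp_integral r u + t / b powr r * Lp_integral r v)"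
      unfolding Lp_integral_def using in_Lp_integrable[OF u] in_Lp_integrable[OF v] by simp
    also have "\<dots> = (a + b) powr r"
      using 3 r0 by (simp add: a_def b_def Lp_integral_eq_Lp_norm_powr)
    finally have "Lp_integral r (\<lambda>z. u z + v z) powr (1 / r) \<le> ((a + b) powr r) powr (1 / r)"
      using Lp_integral_nonneg r0 by (intro powr_mono2) auto
    also have "\<dots> = a + b" using 3 r0 by (simp add: powr_powr)
    finally show ?thesis unfolding Lp_norm_def a_def b_def .
  qed
qed

lemma Lp_norm_reverse_triangle:
  assumes r: "1 \<le> r" and u: "in_Lp r u" and v: "in_Lp r v"
  shows "\<bar>Lp_norm r u - Lp_norm r v\<bar> \<le> Lp_norm r (\<lambda>z. u z - v z)"
proof -
  have r0: "0 < r" using r by simp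
  have d: "in_Lp r (\<lambda>z. u z - v z)"
    using in_Lp_add[OF _ u in_Lp_cmult[OF v r0, of "-1"]] r0 by simp
  have "Lp_norm r u \<le> Lp_norm r (\<lambda>z. u z - v z) + Lp_norm r v"
    using Lp_norm_triangle[OF r d v] by simp
  moreover have "Lp_norm r v \<le> Lp_norm r (\<lambda>z. (-1) * (u z - v z)) + Lp_norm r u"
    using Lp_norm_triangle[OF r in_Lp_cmult[OF d r0, of "-1"] u] by simp
  moreover have "Lp_norm r (\<lambda>z. (-1) * (u z - v z)) = Lp_norm r (\<lambda>z. u z - v z)"
    using Lp_norm_cmult[OF d r0, of "-1"] by simp
  ultimately show ?thesis by linarith
qed

lemma Lp_norm_lower_semicontinuous:
  assumes U: "\<And>n. in_Lp r (U n)" and V: "in_Lp r V" and lim: "\<And>z. (\<lambda>n. U n z) \<longlonglongrightarrow> V z"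
    and r: "0 < r" and c: "c < Lp_norm r V"
  shows "eventually (\<lambda>n. c < Lp_norm r (U n)) sequentially"
proof (cases "c < 0")
  case True
  then show ?thesis by (intro always_eventually allI less_le_trans[OF True Lp_norm_nonneg])
next
  case False
  have U_meas: "(\<lambda>z. ennreal (norm (U n z) powr r)) \<in> borel_measurable lborel" for n
    using in_Lp_measurable[OF U] by measurable
  have liminf_eq: "liminf (\<lambda>n. ennreal (norm (U n z) powr r)) = ennreal (norm (V z) powr r)" for z
    by (intro lim_imp_Liminf) (use lim r in \<open>auto intro!: tendsto_intros\<close>)
  have "ennreal (c powr r) < ennreal (Lp_norm r V powr r)"
    using False c r by (subst ennreal_less_iff) (auto intro: powr_less_mono2)
  also have "ennreal (Lp_norm r V powr r) = (\<integral>\<^sup>+z. ennreal (norm (V z) powr r) \<partial>lborel)"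
    unfolding nn_integral_eq_Lp_integral[OF V] Lp_integral_eq_Lp_norm_powr[OF r] ..
  also have "\<dots> = (\<integral>\<^sup>+z. liminf (\<lambda>n. ennreal (norm (U n z) powr r)) \<partial>lborel)"
    by (simp add: liminf_eq)
  also have "\<dots> \<le> liminf (\<lambda>n. \<integral>\<^sup>+z. ennreal (norm (U n z) powr r) \<partial>lborel)"
    by (rule nn_integral_liminf[OF U_meas])
  also have "\<dots> = liminf (\<lambda>n. ennreal (Lp_norm r (U n) powr r))"
    unfolding nn_integral_eq_Lp_integral[OF U] Lp_integral_eq_Lp_norm_powr[OF r] ..
  finally have "eventually (\<lambda>n. ennreal (c powr r) < ennreal (Lp_norm r (U n) powr r)) sequentially"
    by (rule less_LiminfD)
  then show ?thesis
  proof eventually_elim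
    case (elim n)
    then have "c powr r < Lp_norm r (U n) powr r" by (simp add: ennreal_less_iff)
    then show ?case using False r Lp_norm_nonneg[of r "U n"] by (meson not_le powr_mono2 order.strict_implies_order)
  qed
qed

lemma Lp_norm_tail_tendsto_0:
  fixes f :: "'a::euclidean_space \<Rightarrow> complex"
  assumes f: "in_Lp p f" and p: "0 < p"
  shows "((\<lambda>\<rho>. Lp_norm p (\<lambda>\<xi>. if norm \<xi> \<le> \<rho> then 0 else f \<xi>)) \<longlongrightarrow> 0) at_top"
proof -
  have "((\<lambda>\<rho>. \<integral>\<xi>. (if norm \<xi> \<le> \<rho> then 0 else norm (f \<xi>) powr p) \<partial>lborel) \<longlongrightarrow> integral\<^sup>L lborel (\<lambda>\<xi>::'a. 0::real)) at_top"
  proof (rule integral_dominated_convergence_at_top[where w="\<lambda>\<xi>. norm (f \<xi>) powr p"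
        and s="\<lambda>\<rho> \<xi>. if norm \<xi> \<le> \<rho> then 0 else norm (f \<xi>) powr p" and f="\<lambda>_. 0"])
    show "(\<lambda>\<xi>. if norm \<xi> \<le> \<rho> then 0 else norm (f \<xi>) powr p) \<in> borel_measurable lborel" for \<rho>
      using in_Lp_measurable[OF f] by measurable
    show "AE \<xi> in lborel. ((\<lambda>\<rho>. if norm \<xi> \<le> \<rho> then 0 else norm (f \<xi>) powr p) \<longlongrightarrow> 0) at_top"
    proof (intro AE_I2 tendsto_eventually)
      fix \<xi> :: 'a
      show "eventually (\<lambda>\<rho>. (if norm \<xi> \<le> \<rho> then 0 else norm (f \<xi>) powr p) = 0) at_top"
        using eventually_ge_at_top[of "norm \<xi>"] by eventually_elim simp
    qed
  qed (use in_Lp_integrable[OF f] in \<open>auto intro: always_eventually\<close>)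
  moreover have "Lp_integral p (\<lambda>\<xi>. if norm \<xi> \<le> \<rho> then 0 else f \<xi>)
      = (\<integral>\<xi>. (if norm \<xi> \<le> \<rho> then 0 else norm (f \<xi>) powr p) \<partial>lborel)" for \<rho>
    unfolding Lp_integral_def using p by (intro Bochner_Integration.integral_cong) auto
  ultimately have "((\<lambda>\<rho>. Lp_integral p (\<lambda>\<xi>. if norm \<xi> \<le> \<rho> then 0 else f \<xi>)) \<longlongrightarrow> 0) at_top"
    by simp
  then show ?thesis unfolding Lp_norm_def using p Lp_integral_nonneg
    by (intro tendsto_zero_powrI[OF _ tendsto_const]) (auto intro: always_eventually)
qed

lemma tendsto_Lim_at_top_of_Cauchy_modulus:
  fixes g D :: "real \<Rightarrow> real"
  assumes D: "(D \<longlongrightarrow> 0) at_top" and Cauchy: "\<And>\<rho>0 \<rho>. \<rho>0 \<le> \<rho> \<Longrightarrow> \<bar>g \<rho> - g \<rho>0\<bar> \<le> D \<rho>0"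
  shows "(g \<longlongrightarrow> Lim at_top g) at_top" "\<bar>Lim at_top g - g \<rho>0\<bar> \<le> D \<rho>0"
proof -
  have ev_ge: "eventually (\<lambda>n. \<rho>0 \<le> real n) sequentially" for \<rho>0
    using real_arch_simple eventually_sequentially by (metis of_nat_mono order.trans)
  have "Cauchy (\<lambda>n. g (real n))"
  proof (rule metric_CauchyI)
    fix e :: real assume "0 < e"
    then obtain N where N: "\<And>x. N \<le> x \<Longrightarrow> D x < e / 2"
      using order_tendstoD(2)[OF D, of "e / 2"] by (auto simp: eventually_at_top_linorder)
    obtain M :: nat where M: "N \<le> real M" using real_arch_simple by blast
    have close: "\<bar>g (real m) - g (real M)\<bar> < e / 2" if "M \<le> m" for m
      using Cauchy[of "real M" "real m"] N[OF M] that by simp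
    show "\<exists>M. \<forall>m\<ge>M. \<forall>n\<ge>M. dist (g (real m)) (g (real n)) < e"
    proof (intro exI allI impI)
      fix m n assume "M \<le> m" "M \<le> n"
      with close[of m] close[of n] show "dist (g (real m)) (g (real n)) < e"
        unfolding dist_real_def by linarith
    qed
  qed
  then obtain L where L: "(\<lambda>n. g (real n)) \<longlonglongrightarrow> L" using Cauchy_convergent_iff convergent_def by blast
  have bound: "\<bar>L - g \<rho>0\<bar> \<le> D \<rho>0" for \<rho>0
  proof (rule tendsto_upperbound)
    show "((\<lambda>n. \<bar>g (real n) - g \<rho>0\<bar>) \<longlongrightarrow> \<bar>L - g \<rho>0\<bar>) sequentially"
      using L by (intro tendsto_intros)
    show "eventually (\<lambda>n. \<bar>g (real n) - g \<rho>0\<bar> \<le> D \<rho>0) sequentially"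
      using ev_ge[of \<rho>0] by eventually_elim (rule Cauchy)
  qed simp
  have "(g \<longlongrightarrow> L) at_top"
    using Lim_null_comparison[OF always_eventually D, of "\<lambda>\<rho>. g \<rho> - L"] bound
    by (simp add: abs_minus_commute LIM_zero_iff)
  then have "Lim at_top g = L" by (intro tendsto_Lim) auto
  with \<open>(g \<longlongrightarrow> L) at_top\<close> bound show "(g \<longlongrightarrow> Lim at_top g) at_top" "\<bar>Lim at_top g - g \<rho>0\<bar> \<le> D \<rho>0"
    by auto
qed

section \<open>Changes of variables\<close>

lemma lborel_integral_scaleR:
  fixes F :: "'a::euclidean_space \<Rightarrow> 'b::{banach, second_countable_topology}"
  assumes F[measurable]: "F \<in> borel_measurable borel" and c: "c \<noteq> 0"
  shows "(\<integral>x. F x \<partial>lborel) = (\<bar>c\<bar> ^ DIM('a)) *\<^sub>R (\<integral>x. F (c *\<^sub>R x) \<partial>lborel)"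
proof -
  have "(\<integral>x. F x \<partial>lborel)
      = (\<integral>x. F x \<partial>density (distr lborel borel (\<lambda>x. 0 + c *\<^sub>R x)) (\<lambda>_. ennreal (\<bar>c\<bar> ^ DIM('a))))"
    using arg_cong[OF lborel_affine[OF c, of "0::'a"], of "\<lambda>M. integral\<^sup>L M F"] by (simp add: ennreal_power)
  also have "\<dots> = (\<integral>x. (\<bar>c\<bar> ^ DIM('a)) *\<^sub>R F (c *\<^sub>R x) \<partial>lborel)"
    by (simp add: integral_density integral_distr)
  finally show ?thesis by simp
qed

lemma lborel_nn_integral_scaleR:
  fixes F :: "'a::euclidean_space \<Rightarrow> ennreal"
  assumes F[measurable]: "F \<in> borel_measurable borel" and c: "c \<noteq> 0"
  shows "(\<integral>\<^sup>+x. F x \<partial>lborel) = ennreal (\<bar>c\<bar> ^ DIM('a)) * (\<integral>\<^sup>+x. F (c *\<^sub>R x) \<partial>lborel)"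
proof -
  have "(\<integral>\<^sup>+x. F x \<partial>lborel)
      = (\<integral>\<^sup>+x. F x \<partial>density (distr lborel borel (\<lambda>x. 0 + c *\<^sub>R x)) (\<lambda>_. ennreal (\<bar>c\<bar> ^ DIM('a))))"
    using arg_cong[OF lborel_affine[OF c, of "0::'a"], of "\<lambda>M. integral\<^sup>N M F"] by (simp add: ennreal_power)
  also have "\<dots> = (\<integral>\<^sup>+x. ennreal (\<bar>c\<bar> ^ DIM('a)) * F (c *\<^sub>R x) \<partial>lborel)"
    by (simp add: nn_integral_density nn_integral_distr)
  finally show ?thesis by (simp add: nn_integral_cmult)
qed

lemma lborel_nn_integral_translate:
  fixes F :: "'a::euclidean_space \<Rightarrow> ennreal"
  assumes "F \<in> borel_measurable borel"
  shows "(\<integral>\<^sup>+x. F (t + x) \<partial>lborel) = (\<integral>\<^sup>+x. F x \<partial>lborel)"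
  using nn_integral_distr[of "(+) t" lborel borel F] assms by (simp add: lborel_distr_plus)

lemma lborel_nn_integral_pair:
  fixes G :: "real \<times> 'a::euclidean_space \<Rightarrow> ennreal"
  assumes "G \<in> borel_measurable borel"
  shows "(\<integral>\<^sup>+z. G z \<partial>lborel) = (\<integral>\<^sup>+s. \<integral>\<^sup>+y. G (s, y) \<partial>lborel \<partial>lborel)"
proof -
  have "G \<in> borel_measurable (lborel \<Otimes>\<^sub>M lborel)"
    using assms by (simp only: lborel_prod) simp
  then show ?thesis by (simp only: lborel_prod[symmetric] lborel.nn_integral_fst)
qed

lemma nn_integral_parabolic_scaling:
  fixes G :: "real \<times> 'a::euclidean_space \<Rightarrow> ennreal"
  assumes G[measurable]: "G \<in> borel_measurable borel" and l: "0 < l"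
  shows "(\<integral>\<^sup>+z. G (fst z / l\<^sup>2, (1 / l) *\<^sub>R snd z) \<partial>lborel)
    = ennreal (l ^ (DIM('a) + 2)) * (\<integral>\<^sup>+z. G z \<partial>lborel)"
proof -
  have [measurable]: "G \<in> borel_measurable (borel \<Otimes>\<^sub>M borel)" by (simp only: borel_prod) (rule G)
  have m: "(\<lambda>z. G (fst z / l\<^sup>2, (1 / l) *\<^sub>R snd z)) \<in> borel_measurable borel"
    by (simp only: borel_prod[symmetric]) measurable
  have inner: "(\<integral>\<^sup>+y. G (s, (1 / l) *\<^sub>R y) \<partial>lborel) = ennreal (l ^ DIM('a)) * (\<integral>\<^sup>+y. G (s, y) \<partial>lborel)" for s
    using lborel_nn_integral_scaleR[of "\<lambda>y. G (s, (1 / l) *\<^sub>R y)" l] l by simp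
  have "(\<lambda>s. \<integral>\<^sup>+y. G (s, y) \<partial>lborel) \<in> borel_measurable lborel"
    by (rule lborel.borel_measurable_nn_integral_fst) (simp only: lborel_prod, measurable)
  then have outer_meas: "(\<lambda>s. \<integral>\<^sup>+y. G (s, y) \<partial>lborel) \<in> borel_measurable borel" by simp
  have "(\<integral>\<^sup>+z. G (fst z / l\<^sup>2, (1 / l) *\<^sub>R snd z) \<partial>lborel)
      = (\<integral>\<^sup>+s. ennreal (l ^ DIM('a)) * (\<integral>\<^sup>+y. G (s / l\<^sup>2, y) \<partial>lborel) \<partial>lborel)"
    by (simp only: lborel_nn_integral_pair[OF m] fst_conv snd_conv inner)
  also have "\<dots> = ennreal (l ^ DIM('a)) * (\<integral>\<^sup>+s. (\<integral>\<^sup>+y. G (s / l\<^sup>2, y) \<partial>lborel) \<partial>lborel)"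
    using outer_meas by (intro nn_integral_cmult) measurable
  also have "(\<integral>\<^sup>+s. (\<integral>\<^sup>+y. G (s / l\<^sup>2, y) \<partial>lborel) \<partial>lborel)
      = ennreal (l\<^sup>2) * (\<integral>\<^sup>+s. (\<integral>\<^sup>+y. G (s, y) \<partial>lborel) \<partial>lborel)"
    using nn_integral_real_affine[of "\<lambda>s. \<integral>\<^sup>+y. G (s / l\<^sup>2, y) \<partial>lborel" "l\<^sup>2" 0] l outer_meas
    by simp
  also have "(\<integral>\<^sup>+s. (\<integral>\<^sup>+y. G (s, y) \<partial>lborel) \<partial>lborel) = (\<integral>\<^sup>+z. G z \<partial>lborel)"
    by (simp only: lborel_nn_integral_pair[OF G])
  finally show ?thesis using l
    by (simp add: ennreal_mult'[symmetric] ennreal_power power_add power2_eq_square mult_ac)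
qed

lemma nn_integral_shear:
  fixes G :: "real \<times> 'a::euclidean_space \<Rightarrow> ennreal"
  assumes G[measurable]: "G \<in> borel_measurable borel"
  shows "(\<integral>\<^sup>+z. G (fst z, snd z - fst z *\<^sub>R v) \<partial>lborel) = (\<integral>\<^sup>+z. G z \<partial>lborel)"
proof -
  have [measurable]: "G \<in> borel_measurable (borel \<Otimes>\<^sub>M borel)" by (simp only: borel_prod) (rule G)
  have m: "(\<lambda>z. G (fst z, snd z - fst z *\<^sub>R v)) \<in> borel_measurable borel"
    by (simp only: borel_prod[symmetric]) measurable
  have inner: "(\<integral>\<^sup>+y. G (s, y - s *\<^sub>R v) \<partial>lborel) = (\<integral>\<^sup>+y. G (s, y) \<partial>lborel)" for s
    using lborel_nn_integral_translate[of "\<lambda>y. G (s, y - s *\<^sub>R v)" "s *\<^sub>R v"] by simp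
  show ?thesis
    by (simp only: lborel_nn_integral_pair[OF m] lborel_nn_integral_pair[OF G] fst_conv snd_conv inner)
qed

section \<open>The extension operators\<close>

lemma ext_op_measurable:
  fixes g :: "'a::euclidean_space \<Rightarrow> complex"
  assumes [measurable]: "g \<in> borel_measurable borel"
  shows "ext_op g \<in> borel_measurable borel"
proof -
  define F where "F = (\<lambda>(z::real \<times> 'a) \<xi>. exp (\<i> * complex_of_real (fst z * (norm \<xi>)\<^sup>2 + inner (snd z) \<xi>)) * g \<xi>)"
  have "case_prod F \<in> borel_measurable (lborel \<Otimes>\<^sub>M lborel)"
    unfolding F_def by (simp only: lborel_prod measurable_lborel2 borel_prod[symmetric]) measurable
  then have "(\<lambda>z. \<integral>\<xi>. F z \<xi> \<partial>lborel) \<in> borel_measurable lborel"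
    by (rule lborel.borel_measurable_lebesgue_integral)
  moreover have "ext_op g = (\<lambda>z. \<integral>\<xi>. F z \<xi> \<partial>lborel)"
    unfolding ext_op_def F_def by (auto simp: fun_eq_iff)
  ultimately show ?thesis by simp
qed

lemma norm_exp_i_times_of_real: "norm (exp (\<i> * complex_of_real r)) = 1"
  by (simp add: norm_exp_i_times)

lemma integrable_ext_op_integrand:
  fixes g :: "'a::euclidean_space \<Rightarrow> complex"
  assumes g: "integrable lborel g"
  shows "integrable lborel (\<lambda>\<xi>. exp (\<i> * complex_of_real (t * (norm \<xi>)\<^sup>2 + inner x \<xi>)) * g \<xi>)"
proof (rule Bochner_Integration.integrable_bound[OF g])
  have [measurable]: "g \<in> borel_measurable borel" using borel_measurable_integrable[OF g] by simp
  show "(\<lambda>\<xi>. exp (\<i> * complex_of_real (t * (norm \<xi>)\<^sup>2 + inner x \<xi>)) * g \<xi>) \<in> borel_measurable lborel"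
    by measurable
qed (simp add: AE_I2 norm_mult norm_exp_i_times_of_real)

lemma ext_op_diff:
  fixes g h :: "'a::euclidean_space \<Rightarrow> complex"
  assumes "integrable lborel g" "integrable lborel h"
  shows "ext_op (\<lambda>\<xi>. g \<xi> - h \<xi>) = (\<lambda>z. ext_op g z - ext_op h z)"
  using integrable_ext_op_integrand[OF assms(1)] integrable_ext_op_integrand[OF assms(2)]
  by (auto simp: ext_op_def right_diff_distrib fun_eq_iff)

lemma ext_op_eq_0_AE:
  assumes "AE \<xi> in lborel. g \<xi> = 0"
  shows "ext_op g = (\<lambda>z. 0)"
  using assms by (auto simp: ext_op_def fun_eq_iff intro!: integral_eq_zero_AE elim!: AE_mp)

lemma isCont_ext_op:
  fixes g :: "'a::euclidean_space \<Rightarrow> complex"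
  assumes g: "integrable lborel g"
  shows "isCont (ext_op g) z"
proof (rule continuous_at_sequentiallyI)
  fix Z assume Z: "Z \<longlonglongrightarrow> z"
  have [measurable]: "g \<in> borel_measurable borel" using borel_measurable_integrable[OF g] by simp
  define F where "F = (\<lambda>z \<xi>. exp (\<i> * complex_of_real (fst z * (norm \<xi>)\<^sup>2 + inner (snd z) \<xi>)) * g \<xi>)"
  have eq: "ext_op g w = (\<integral>\<xi>. F w \<xi> \<partial>lborel)" for w
    unfolding ext_op_def F_def by (cases w) auto
  have "(\<lambda>n. \<integral>\<xi>. F (Z n) \<xi> \<partial>lborel) \<longlonglongrightarrow> (\<integral>\<xi>. F z \<xi> \<partial>lborel)"
  proof (rule integral_dominated_convergence[where w="\<lambda>\<xi>. norm (g \<xi>)"])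
    show "AE \<xi> in lborel. (\<lambda>n. F (Z n) \<xi>) \<longlonglongrightarrow> F z \<xi>"
      unfolding F_def using Z by (intro AE_I2 tendsto_intros)
  qed (use g in \<open>auto simp: F_def norm_mult norm_exp_i_times_of_real\<close>)
  then show "(\<lambda>n. ext_op g (Z n)) \<longlonglongrightarrow> ext_op g z" by (simp add: eq)
qed

lemma ext_op_shift_eq:
  fixes g :: "'a::euclidean_space \<Rightarrow> complex"
  shows "ext_op_shift \<tau>0 \<xi>0 g (t, x) =
    exp (\<i> * complex_of_real (((norm \<xi>0)\<^sup>2 + \<tau>0) * t)) * ext_op g (t, x - t *\<^sub>R (2 *\<^sub>R \<xi>0))"
proof -
  have "t * ((norm (\<xi> - \<xi>0))\<^sup>2 + \<tau>0) + inner x \<xi>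
      = ((norm \<xi>0)\<^sup>2 + \<tau>0) * t + (t * (norm \<xi>)\<^sup>2 + inner (x - t *\<^sub>R (2 *\<^sub>R \<xi>0)) \<xi>)" for \<xi>
    by (simp add: power2_norm_eq_inner inner_diff_left inner_diff_right inner_commute algebra_simps)
  then have integrand: "exp (\<i> * complex_of_real (t * ((norm (\<xi> - \<xi>0))\<^sup>2 + \<tau>0) + inner x \<xi>)) * g \<xi>
      = exp (\<i> * complex_of_real (((norm \<xi>0)\<^sup>2 + \<tau>0) * t)) *
        (exp (\<i> * complex_of_real (t * (norm \<xi>)\<^sup>2 + inner (x - t *\<^sub>R (2 *\<^sub>R \<xi>0)) \<xi>)) * g \<xi>)" for \<xi>
    by (simp only: of_real_add distrib_left exp_add mult.assoc)
  show ?thesis unfolding ext_op_shift_def ext_op_def prod.case integrand by (rule integral_mult_right_zero)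
qed

lemma ext_op_dilation:
  fixes h :: "'a::euclidean_space \<Rightarrow> complex"
  assumes [measurable]: "h \<in> borel_measurable borel" and l: "0 < l"
  shows "ext_op (\<lambda>\<xi>. complex_of_real a * h (l *\<^sub>R \<xi>)) (t, x) =
    complex_of_real (a / l ^ DIM('a)) * ext_op h (t / l\<^sup>2, (1 / l) *\<^sub>R x)"
proof -
  define F where "F = (\<lambda>\<xi>. exp (\<i> * complex_of_real (t * (norm \<xi>)\<^sup>2 + inner x \<xi>)) * (complex_of_real a * h (l *\<^sub>R \<xi>)))"
  have [measurable]: "F \<in> borel_measurable borel" unfolding F_def by measurable
  have phase: "t * (norm ((1 / l) *\<^sub>R \<xi>))\<^sup>2 + inner x ((1 / l) *\<^sub>R \<xi>) = t / l\<^sup>2 * (norm \<xi>)\<^sup>2 + inner ((1 / l) *\<^sub>R x) \<xi>"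
    for \<xi> using l by (simp add: power2_eq_square field_simps)
  have "ext_op (\<lambda>\<xi>. complex_of_real a * h (l *\<^sub>R \<xi>)) (t, x) = (\<bar>1 / l\<bar> ^ DIM('a)) *\<^sub>R (\<integral>\<xi>. F ((1 / l) *\<^sub>R \<xi>) \<partial>lborel)"
    unfolding ext_op_def prod.case F_def[symmetric] using l by (intro lborel_integral_scaleR) auto
  also have "(\<lambda>\<xi>. F ((1 / l) *\<^sub>R \<xi>)) = (\<lambda>\<xi>. complex_of_real a *
       (exp (\<i> * complex_of_real (t / l\<^sup>2 * (norm \<xi>)\<^sup>2 + inner ((1 / l) *\<^sub>R x) \<xi>)) * h \<xi>))"
    unfolding F_def phase using l by (simp add: fun_eq_iff)
  finally show ?thesis
    unfolding ext_op_def using l by (simp add: scaleR_conv_of_real power_divide)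
qed

section \<open>Galilean boosts and parabolic rescaling\<close>

definition galilean :: "real \<Rightarrow> 'a::euclidean_space \<Rightarrow> (real \<times> 'a \<Rightarrow> complex) \<Rightarrow> real \<times> 'a \<Rightarrow> complex" where
  "galilean \<theta> v w = (\<lambda>z. exp (\<i> * complex_of_real (\<theta> * fst z)) * w (fst z, snd z - fst z *\<^sub>R v))"

lemma galilean_measurable:
  assumes w: "w \<in> borel_measurable borel"
  shows "galilean \<theta> v w \<in> borel_measurable borel"
proof -
  have [measurable]: "w \<in> borel_measurable (borel \<Otimes>\<^sub>M borel)" by (simp only: borel_prod) (rule w)
  show ?thesis unfolding galilean_def by (simp only: borel_prod[symmetric]) measurable
qed

lemma galilean_diff: "galilean \<theta> v (\<lambda>z. w1 z - w2 z) = (\<lambda>z. galilean \<theta> v w1 z - galilean \<theta> v w2 z)"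
  by (simp add: galilean_def fun_eq_iff algebra_simps)

lemma
  assumes w: "in_Lp r w"
  shows in_Lp_galilean: "in_Lp r (galilean \<theta> v w)"
    and Lp_norm_galilean: "Lp_norm r (galilean \<theta> v w) = Lp_norm r w"
proof -
  have [measurable]: "w \<in> borel_measurable borel" using in_Lp_measurable[OF w] by simp
  have "(\<integral>\<^sup>+z. ennreal (norm (galilean \<theta> v w z) powr r) \<partial>lborel)
      = (\<integral>\<^sup>+z. ennreal (norm (w (fst z, snd z - fst z *\<^sub>R v)) powr r) \<partial>lborel)"
    unfolding galilean_def by (simp add: norm_mult norm_exp_i_times_of_real)
  also have "\<dots> = (\<integral>\<^sup>+z. ennreal (norm (w z) powr r) \<partial>lborel)"
    using nn_integral_shear[of "\<lambda>z. ennreal (norm (w z) powr r)" v] by simp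
  finally have eq: "(\<integral>\<^sup>+z. ennreal (norm (galilean \<theta> v w z) powr r) \<partial>lborel)
      = (\<integral>\<^sup>+z. ennreal (norm (w z) powr r) \<partial>lborel)" .
  have "galilean \<theta> v w \<in> borel_measurable lborel" using galilean_measurable[of w] by simp
  then show "in_Lp r (galilean \<theta> v w)" "Lp_norm r (galilean \<theta> v w) = Lp_norm r w"
    using in_Lp_nn_integral_eq[OF _ w eq] Lp_norm_nn_integral_eq[OF _ w eq] by auto
qed

lemma
  assumes w: "in_Lp r w" and r: "1 \<le> r"
  shows in_Lp_add_galilean: "in_Lp r (\<lambda>z. w z + galilean \<theta> v w z)"
    and Lp_norm_add_galilean_le: "Lp_norm r (\<lambda>z. w z + galilean \<theta> v w z) \<le> 2 * Lp_norm r w"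
proof -
  have r0: "0 < r" using r by simp
  show "in_Lp r (\<lambda>z. w z + galilean \<theta> v w z)"
    using in_Lp_add[OF _ w in_Lp_galilean[OF w]] r0 by simp
  show "Lp_norm r (\<lambda>z. w z + galilean \<theta> v w z) \<le> 2 * Lp_norm r w"
    using Lp_norm_triangle[OF r w in_Lp_galilean[OF w]] Lp_norm_galilean[OF w] by simp
qed

lemma tendsto_galilean:
  assumes w: "isCont w z" and \<theta>: "(\<theta> \<longlongrightarrow> 0) F" and v: "(v \<longlongrightarrow> 0) F"
  shows "((\<lambda>n. galilean (\<theta> n) (v n) w z) \<longlongrightarrow> w z) F"
proof -
  have "((\<lambda>n. (fst z, snd z - fst z *\<^sub>R v n)) \<longlongrightarrow> (fst z, snd z - fst z *\<^sub>R 0)) F"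
    using v by (intro tendsto_intros)
  then have "((\<lambda>n. w (fst z, snd z - fst z *\<^sub>R v n)) \<longlongrightarrow> w z) F"
    using isCont_tendsto_compose[of z w] w by simp
  moreover have "((\<lambda>n. exp (\<i> * complex_of_real (\<theta> n * fst z))) \<longlongrightarrow> exp (\<i> * complex_of_real (0 * fst z))) F"
    using \<theta> by (intro tendsto_intros)
  ultimately show ?thesis unfolding galilean_def using tendsto_mult by fastforce
qed

lemma ext_op_pair_dilation:
  fixes h :: "'a::euclidean_space \<Rightarrow> complex" and \<tau>0 :: real and \<xi>0 :: 'a
  assumes h: "h \<in> borel_measurable borel" and l: "0 < l"
  defines "\<theta> \<equiv> (norm \<xi>0)\<^sup>2 + \<tau>0"
  shows "ext_op (\<lambda>\<xi>. complex_of_real a * h (l *\<^sub>R \<xi>)) z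
      + ext_op_shift \<tau>0 \<xi>0 (\<lambda>\<xi>. complex_of_real a * h (l *\<^sub>R \<xi>)) z
    = complex_of_real (a / l ^ DIM('a)) *
      (ext_op h (fst z / l\<^sup>2, (1 / l) *\<^sub>R snd z)
       + galilean (l\<^sup>2 * \<theta>) ((2 * l) *\<^sub>R \<xi>0) (ext_op h) (fst z / l\<^sup>2, (1 / l) *\<^sub>R snd z))"
proof -
  obtain t x where z: "z = (t, x)" by (cases z)
  have "(1 / l) *\<^sub>R (x - t *\<^sub>R (2 *\<^sub>R \<xi>0)) = (1 / l) *\<^sub>R x - (t / l\<^sup>2) *\<^sub>R ((2 * l) *\<^sub>R \<xi>0)"
    using l by (simp add: scaleR_diff_right power2_eq_square)
  moreover have "l\<^sup>2 * \<theta> * (t / l\<^sup>2) = \<theta> * t" using l by simp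
  ultimately show ?thesis
    unfolding z fst_conv snd_conv ext_op_shift_eq ext_op_dilation[OF h l] galilean_def \<theta>_def[symmetric]
    by (simp add: distrib_left)
qed

lemma critical_exponent:
  fixes p p' q d :: real
  assumes "1 / p + 1 / p' = 1" and "q = (d + 2) / d * p'" and "0 < d" and "1 < p"
  shows "q * (d / p - d) + (d + 2) = 0"
proof -
  have "p' \<noteq> 0" using assms(1,4) by auto
  then have "p' / p - p' = -1"
    using assms(1,4) by (simp add: field_simps)
  moreover have "q * (d / p - d) = ((d + 2) / d * p') * (d * (1 / p - 1))"
    using assms(2) by (simp add: right_diff_distrib)
  then have "q * (d / p - d) = (d + 2) * (p' / p - p')"
    using assms(3) by (simp add: right_diff_distrib)
  ultimately show ?thesis by simp
qed

lemma nn_integral_ext_op_pair_dilation: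
  fixes h :: "'a::euclidean_space \<Rightarrow> complex" and \<tau>0 :: real and \<xi>0 :: 'a
  assumes h[measurable]: "h \<in> borel_measurable borel" and l: "0 < l" and r: "0 < r"
    and critical: "r * (e - real DIM('a)) + (real DIM('a) + 2) = 0"
  defines "\<theta> \<equiv> (norm \<xi>0)\<^sup>2 + \<tau>0"
  shows "(\<integral>\<^sup>+z. ennreal (norm (ext_op (\<lambda>\<xi>. complex_of_real (l powr e) * h (l *\<^sub>R \<xi>)) z
          + ext_op_shift \<tau>0 \<xi>0 (\<lambda>\<xi>. complex_of_real (l powr e) * h (l *\<^sub>R \<xi>)) z) powr r) \<partial>lborel)
    = (\<integral>\<^sup>+z. ennreal (norm (ext_op h z + galilean (l\<^sup>2 * \<theta>) ((2 * l) *\<^sub>R \<xi>0) (ext_op h) z) powr r) \<partial>lborel)"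
proof -
  define G where "G z = ennreal (norm (ext_op h z + galilean (l\<^sup>2 * \<theta>) ((2 * l) *\<^sub>R \<xi>0) (ext_op h) z) powr r)"
    for z
  have G_meas: "G \<in> borel_measurable borel"
    unfolding G_def using ext_op_measurable[OF h] galilean_measurable[OF ext_op_measurable[OF h]]
    by measurable
  define c where "c = l powr e / l ^ DIM('a)"
  have c: "0 \<le> c" "c = l powr (e - real DIM('a))"
    unfolding c_def using l by (auto simp: powr_diff powr_realpow)
  \<comment> \<open>Criticality of the exponent is exactly what makes the Jacobian cancel.\<close>
  have Jacobian: "c powr r * l ^ (DIM('a) + 2) = 1"
  proof -
    have "l ^ (DIM('a) + 2) = l powr (real DIM('a) + 2)"
      using l powr_realpow[of l "DIM('a) + 2"] by (simp add: add.commute)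
    moreover have "c powr r = l powr (r * (e - real DIM('a)))"
      using l c(2) by (simp add: powr_powr mult.commute)
    ultimately have "c powr r * l ^ (DIM('a) + 2) = l powr (r * (e - real DIM('a)) + (real DIM('a) + 2))"
      by (simp add: powr_add)
    then show ?thesis using critical l by simp
  qed
  have "(\<integral>\<^sup>+z. ennreal (norm (ext_op (\<lambda>\<xi>. complex_of_real (l powr e) * h (l *\<^sub>R \<xi>)) z
          + ext_op_shift \<tau>0 \<xi>0 (\<lambda>\<xi>. complex_of_real (l powr e) * h (l *\<^sub>R \<xi>)) z) powr r) \<partial>lborel)
     = (\<integral>\<^sup>+z. ennreal (c powr r) * G (fst z / l\<^sup>2, (1 / l) *\<^sub>R snd z) \<partial>lborel)"
    unfolding ext_op_pair_dilation[OF h l] G_def c_def[symmetric] \<theta>_def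
    using c(1) by (simp add: norm_mult powr_mult ennreal_mult')
  also have "\<dots> = ennreal (c powr r) * ennreal (l ^ (DIM('a) + 2)) * (\<integral>\<^sup>+z. G z \<partial>lborel)"
  proof -
    have [measurable]: "G \<in> borel_measurable (borel \<Otimes>\<^sub>M borel)" by (simp only: borel_prod) (rule G_meas)
    have "(\<lambda>z. G (fst z / l\<^sup>2, (1 / l) *\<^sub>R snd z)) \<in> borel_measurable lborel"
      by (simp only: measurable_lborel2 borel_prod[symmetric]) measurable
    then show ?thesis by (simp add: nn_integral_cmult nn_integral_parabolic_scaling[OF G_meas l] mult.assoc)
  qed
  also have "\<dots> = (\<integral>\<^sup>+z. G z \<partial>lborel)"
    using Jacobian l by (simp add: ennreal_mult'[symmetric])
  finally show ?thesis unfolding G_def .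
qed

section \<open>Truncations and the constant \<open>A_p\<close>\<close>

lemma integrable_trunc:
  assumes g: "in_Lp p g" and p: "1 \<le> p"
  shows "integrable lborel (trunc \<rho> g)"
proof (rule Bochner_Integration.integrable_bound)
  show "integrable lborel (\<lambda>\<xi>. indicator (cball 0 \<rho>) \<xi> + norm (g \<xi>) powr p :: real)"
    using in_Lp_integrable[OF g] emeasure_lborel_cball_finite[of 0 \<rho>]
    by (intro Bochner_Integration.integrable_add integrable_real_indicator) (auto simp: top.not_eq_extremum)
  show "trunc \<rho> g \<in> borel_measurable lborel"
    using in_Lp_measurable[OF g] unfolding trunc_def by measurable
  have "norm (g \<xi>) \<le> 1 + norm (g \<xi>) powr p" for \<xi>
  proof (cases "norm (g \<xi>) \<le> 1")
    case False
    then have "norm (g \<xi>) powr 1 \<le> norm (g \<xi>) powr p" using p by (intro powr_mono) auto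
    then show ?thesis using False by simp
  qed (simp add: add_increasing2)
  then show "AE \<xi> in lborel. norm (trunc \<rho> g \<xi>) \<le> norm (indicator (cball 0 \<rho>) \<xi> + norm (g \<xi>) powr p :: real)"
    by (intro AE_I2) (auto simp: trunc_def indicator_def dist_norm)
qed

lemma ext_norm_eq_Lim:
  assumes "((\<lambda>R. lpnorm q (T (trunc R g))) \<longlongrightarrow> L) at_top"
  shows "ext_norm q T g = L"
  unfolding ext_norm_def using assms by (intro tendsto_Lim) auto

lemma ext_norm_bounded_support:
  assumes "\<And>\<xi>. R < norm \<xi> \<Longrightarrow> g \<xi> = 0"
  shows "ext_norm q T g = lpnorm q (T g)"
proof (rule ext_norm_eq_Lim, rule tendsto_eventually)
  have "\<forall>\<^sub>F R' in at_top. trunc R' g = g"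
    using eventually_ge_at_top[of R] by eventually_elim (use assms in \<open>auto simp: trunc_def fun_eq_iff\<close>)
  then show "\<forall>\<^sub>F R' in at_top. lpnorm q (T (trunc R' g)) = lpnorm q (T g)"
    by eventually_elim simp
qed

lemma
  fixes g :: "'a::euclidean_space \<Rightarrow> complex"
  assumes A: "A_const p q TYPE('a) = ennreal A" "0 \<le> A" and p: "0 < p"
    and g: "in_Lp p g" and supp: "\<And>\<xi>. R < norm \<xi> \<Longrightarrow> g \<xi> = 0"
  shows in_Lp_ext_op: "in_Lp q (ext_op g)"
    and Lp_norm_ext_op_le: "Lp_norm q (ext_op g) \<le> A * Lp_norm p g"
proof -
  have Eg_meas: "ext_op g \<in> borel_measurable lborel"
    using ext_op_measurable[of g] in_Lp_measurable[OF g] by simp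
  have Eg_norm: "ext_norm q ext_op g = lpnorm q (ext_op g)"
    using supp by (rule ext_norm_bounded_support)
  have "in_Lp q (ext_op g) \<and> Lp_norm q (ext_op g) \<le> A * Lp_norm p g"
  proof (cases "Lp_norm p g = 0")
    case True
    then have "ext_op g = (\<lambda>z. 0)" by (intro ext_op_eq_0_AE Lp_norm_eq_0_AE[OF g _ p])
    then show ?thesis using True by (simp add: in_Lp_def Lp_norm_def[of q] Lp_integral_def)
  next
    case False
    then have pos: "0 < Lp_norm p g" using Lp_norm_nonneg[of p g] by simp
    have "ext_norm q ext_op g / lpnorm p g \<le> A_const p q TYPE('a)"
      unfolding A_const_def using g pos by (intro SUP_upper) (auto simp: lpnorm_eq_Lp_norm)
    then have "lpnorm q (ext_op g) / ennreal (Lp_norm p g) \<le> ennreal A"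
      using Eg_norm A lpnorm_eq_Lp_norm[OF g] by simp
    then have "lpnorm q (ext_op g) / ennreal (Lp_norm p g) * ennreal (Lp_norm p g)
        \<le> ennreal A * ennreal (Lp_norm p g)"
      by (rule mult_right_mono) simp
    then have le: "lpnorm q (ext_op g) \<le> ennreal (A * Lp_norm p g)"
      using pos A(2) by (simp add: ennreal_divide_times ennreal_mult)
    then have "(\<integral>\<^sup>+ z. ennreal (norm (ext_op g z) powr q) \<partial>lborel) \<noteq> \<infinity>"
      unfolding lpnorm_def by (auto simp: top_unique)
    then have Eg_Lp: "in_Lp q (ext_op g)"
      unfolding in_Lp_def using Eg_meas by (simp add: top.not_eq_extremum)
    with le have "Lp_norm q (ext_op g) \<le> A * Lp_norm p g"
      using A(2) pos by (simp add: lpnorm_eq_Lp_norm ennreal_le_iff)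
    with Eg_Lp show ?thesis by simp
  qed
  then show "in_Lp q (ext_op g)" "Lp_norm q (ext_op g) \<le> A * Lp_norm p g" by auto
qed

locale extremizer =
  fixes p p' q :: real and f :: "'a::euclidean_space \<Rightarrow> complex" and \<tau>0 :: real and \<xi>0 :: 'a
  assumes p_gt1: "1 < p"
    and conj: "1 / p + 1 / p' = 1"
    and q_def: "q = (real DIM('a) + 2) / real DIM('a) * p'"
    and q_gt_p: "q > p"
    and A_fin: "A_const p q TYPE('a) < \<infinity>"
    and f_Lp: "in_Lp p f"
    and f_nz: "lpnorm p f \<noteq> 0"
    and extremizer: "ext_norm q ext_op f = A_const p q TYPE('a) * lpnorm p f"
begin

definition A :: real where "A = enn2real (A_const p q TYPE('a))"

definition tail_norm :: "real \<Rightarrow> real" where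
  "tail_norm \<rho> = Lp_norm p (\<lambda>\<xi>. if norm \<xi> \<le> \<rho> then 0 else f \<xi>)"

definition Ef :: "real \<Rightarrow> real \<times> 'a \<Rightarrow> complex" where
  "Ef \<rho> = ext_op (trunc \<rho> f)"

definition Ef_norm :: "real \<Rightarrow> real" where
  "Ef_norm \<rho> = Lp_norm q (Ef \<rho>)"

\<comment> \<open>After the parabolic rescaling, the shifted operator becomes a Galilean boost of \<open>Ef\<close>.\<close>
definition boost :: "real \<Rightarrow> (real \<times> 'a \<Rightarrow> complex) \<Rightarrow> real \<times> 'a \<Rightarrow> complex" where
  "boost l = galilean (l\<^sup>2 * ((norm \<xi>0)\<^sup>2 + \<tau>0)) ((2 * l) *\<^sub>R \<xi>0)"

definition pair_norm :: "real \<Rightarrow> real \<Rightarrow> real" where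
  "pair_norm l \<rho> = Lp_norm q (\<lambda>z. Ef \<rho> z + boost l (Ef \<rho>) z)"

lemma A_const_eq: "A_const p q TYPE('a) = ennreal A" and A_nonneg: "0 \<le> A"
  unfolding A_def using A_fin by (cases "A_const p q TYPE('a)"; simp)+

lemma p_pos: "0 < p"
  using p_gt1 by simp

lemma q_gt_1: "1 < q"
  using p_gt1 q_gt_p by simp

lemma Lp_norm_f_pos: "0 < Lp_norm p f"
  using f_nz lpnorm_eq_Lp_norm[OF f_Lp] Lp_norm_nonneg[of p f] by (cases "Lp_norm p f = 0") auto

lemma in_Lp_trunc: "in_Lp p (trunc \<rho> f)"
  using in_Lp_measurable[OF f_Lp] by (intro in_Lp_mono[OF f_Lp _ _ p_pos]) (auto simp: trunc_def)

lemma in_Lp_Ef: "in_Lp q (Ef \<rho>)"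
  unfolding Ef_def by (rule in_Lp_ext_op[OF A_const_eq A_nonneg p_pos in_Lp_trunc, where R = \<rho>])
    (simp add: trunc_def)

lemma isCont_Ef: "isCont (Ef \<rho>) z"
  unfolding Ef_def using f_Lp p_gt1 by (intro isCont_ext_op integrable_trunc) auto

lemma
  assumes "\<rho>0 \<le> \<rho>"
  shows in_Lp_Ef_diff: "in_Lp q (\<lambda>z. Ef \<rho> z - Ef \<rho>0 z)"
    and Lp_norm_Ef_diff_le: "Lp_norm q (\<lambda>z. Ef \<rho> z - Ef \<rho>0 z) \<le> A * tail_norm \<rho>0"
proof -
  define g where "g \<xi> = trunc \<rho> f \<xi> - trunc \<rho>0 f \<xi>" for \<xi>
  have Ef_diff: "(\<lambda>z. Ef \<rho> z - Ef \<rho>0 z) = ext_op g"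
    unfolding Ef_def g_def using f_Lp p_gt1 by (intro ext_op_diff[symmetric] integrable_trunc) auto
  have g_le_tail: "norm (g \<xi>) \<le> norm (if norm \<xi> \<le> \<rho>0 then 0 else f \<xi>)" for \<xi>
    unfolding g_def trunc_def using assms by auto
  have "g \<in> borel_measurable lborel"
    unfolding g_def trunc_def using in_Lp_measurable[OF f_Lp] by measurable
  moreover have "in_Lp p (\<lambda>\<xi>. if norm \<xi> \<le> \<rho>0 then 0 else f \<xi>)"
    using in_Lp_measurable[OF f_Lp] by (intro in_Lp_mono[OF f_Lp _ _ p_pos]) auto
  ultimately have g: "in_Lp p g" "Lp_norm p g \<le> tail_norm \<rho>0"
    unfolding tail_norm_def using g_le_tail p_pos by (auto intro: in_Lp_mono Lp_norm_mono)
  have supp: "\<And>\<xi>. \<rho> < norm \<xi> \<Longrightarrow> g \<xi> = 0"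
    unfolding g_def trunc_def using assms by auto
  show "in_Lp q (\<lambda>z. Ef \<rho> z - Ef \<rho>0 z)"
    unfolding Ef_diff by (rule in_Lp_ext_op[OF A_const_eq A_nonneg p_pos g(1) supp])
  have "Lp_norm q (ext_op g) \<le> A * Lp_norm p g"
    by (rule Lp_norm_ext_op_le[OF A_const_eq A_nonneg p_pos g(1) supp])
  also have "\<dots> \<le> A * tail_norm \<rho>0" using g(2) A_nonneg by (rule mult_left_mono)
  finally show "Lp_norm q (\<lambda>z. Ef \<rho> z - Ef \<rho>0 z) \<le> A * tail_norm \<rho>0" unfolding Ef_diff .
qed

lemma Ef_norm_Cauchy: "\<rho>0 \<le> \<rho> \<Longrightarrow> \<bar>Ef_norm \<rho> - Ef_norm \<rho>0\<bar> \<le> A * tail_norm \<rho>0"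
  unfolding Ef_norm_def using q_gt_1
  by (intro order.trans[OF Lp_norm_reverse_triangle[OF _ in_Lp_Ef in_Lp_Ef] Lp_norm_Ef_diff_le]) auto

lemma pair_norm_Cauchy:
  assumes "\<rho>0 \<le> \<rho>"
  shows "\<bar>pair_norm l \<rho> - pair_norm l \<rho>0\<bar> \<le> 2 * A * tail_norm \<rho>0"
proof -
  have q: "1 \<le> q" using q_gt_1 by simp
  have "\<bar>pair_norm l \<rho> - pair_norm l \<rho>0\<bar>
      \<le> Lp_norm q (\<lambda>z. (Ef \<rho> z + boost l (Ef \<rho>) z) - (Ef \<rho>0 z + boost l (Ef \<rho>0) z))"
    unfolding pair_norm_def boost_def
    by (rule Lp_norm_reverse_triangle[OF q in_Lp_add_galilean[OF in_Lp_Ef q] in_Lp_add_galilean[OF in_Lp_Ef q]])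
  also have "(\<lambda>z. (Ef \<rho> z + boost l (Ef \<rho>) z) - (Ef \<rho>0 z + boost l (Ef \<rho>0) z))
      = (\<lambda>z. (Ef \<rho> z - Ef \<rho>0 z) + boost l (\<lambda>z. Ef \<rho> z - Ef \<rho>0 z) z)"
    unfolding boost_def galilean_diff by (simp add: fun_eq_iff)
  also have "Lp_norm q \<dots> \<le> 2 * Lp_norm q (\<lambda>z. Ef \<rho> z - Ef \<rho>0 z)"
    unfolding boost_def by (rule Lp_norm_add_galilean_le[OF in_Lp_Ef_diff[OF assms] q])
  also have "\<dots> \<le> 2 * A * tail_norm \<rho>0" using Lp_norm_Ef_diff_le[OF assms] by simp
  finally show ?thesis .
qed

lemma tail_norm_tendsto_0: "(tail_norm \<longlongrightarrow> 0) at_top"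
  unfolding tail_norm_def[abs_def] by (rule Lp_norm_tail_tendsto_0[OF f_Lp p_pos])

lemma tendsto_Lim_Ef_norm: "(Ef_norm \<longlongrightarrow> Lim at_top Ef_norm) at_top"
  and Lim_Ef_norm_approx: "\<bar>Lim at_top Ef_norm - Ef_norm \<rho>0\<bar> \<le> A * tail_norm \<rho>0"
  using tendsto_Lim_at_top_of_Cauchy_modulus[OF tendsto_mult_right_zero[OF tail_norm_tendsto_0] Ef_norm_Cauchy]
  by simp_all

lemma tendsto_Lim_pair_norm: "(pair_norm l \<longlongrightarrow> Lim at_top (pair_norm l)) at_top"
  and Lim_pair_norm_approx: "\<bar>Lim at_top (pair_norm l) - pair_norm l \<rho>0\<bar> \<le> 2 * A * tail_norm \<rho>0"
  using tendsto_Lim_at_top_of_Cauchy_modulus[OF tendsto_mult_right_zero[OF tail_norm_tendsto_0] pair_norm_Cauchy]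
  by simp_all

lemma Lim_pair_norm_nonneg: "0 \<le> Lim at_top (pair_norm l)"
  using tendsto_Lim_pair_norm by (rule tendsto_lowerbound) (simp_all add: pair_norm_def Lp_norm_nonneg)

lemma Lim_Ef_norm_eq: "Lim at_top Ef_norm = A * Lp_norm p f"
proof -
  have "lpnorm q (ext_op (trunc R f)) = ennreal (Ef_norm R)" for R
    using lpnorm_eq_Lp_norm[OF in_Lp_Ef] by (simp add: Ef_norm_def Ef_def)
  then have "ext_norm q ext_op f = ennreal (Lim at_top Ef_norm)"
    using tendsto_Lim_Ef_norm by (intro ext_norm_eq_Lim) (simp add: tendsto_ennrealI)
  then have "ennreal (Lim at_top Ef_norm) = ennreal (A * Lp_norm p f)"
    using extremizer A_const_eq lpnorm_eq_Lp_norm[OF f_Lp]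
    by (simp add: ennreal_mult[OF A_nonneg Lp_norm_nonneg])
  moreover have "0 \<le> Lim at_top Ef_norm"
    using tendsto_Lim_Ef_norm by (rule tendsto_lowerbound) (simp_all add: Ef_norm_def Lp_norm_nonneg)
  ultimately show ?thesis using A_nonneg Lp_norm_nonneg[of p f] by simp
qed

lemma ext_norm_dilation:
  assumes l: "0 < l"
  shows "ext_norm q (\<lambda>g z. ext_op g z + ext_op_shift \<tau>0 \<xi>0 g z)
           (\<lambda>\<xi>. complex_of_real (l powr (real DIM('a) / p)) * f (l *\<^sub>R \<xi>))
    = ennreal (Lim at_top (pair_norm l))"
proof -
  define a where "a = l powr (real DIM('a) / p)"
  have critical: "q * (real DIM('a) / p - real DIM('a)) + (real DIM('a) + 2) = 0"
    using critical_exponent[OF conj q_def _ p_gt1] by simp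
  have pair_norm_dilation: "lpnorm q (\<lambda>z. ext_op (trunc R (\<lambda>\<xi>. complex_of_real a * f (l *\<^sub>R \<xi>))) z
      + ext_op_shift \<tau>0 \<xi>0 (trunc R (\<lambda>\<xi>. complex_of_real a * f (l *\<^sub>R \<xi>))) z)
    = ennreal (pair_norm l (l * R))" for R
  proof -
    have "trunc R (\<lambda>\<xi>. complex_of_real a * f (l *\<^sub>R \<xi>)) = (\<lambda>\<xi>. complex_of_real a * trunc (l * R) f (l *\<^sub>R \<xi>))"
      unfolding trunc_def using l by (auto simp: fun_eq_iff)
    moreover have "lpnorm q (\<lambda>z. ext_op (\<lambda>\<xi>. complex_of_real a * trunc (l * R) f (l *\<^sub>R \<xi>)) z
        + ext_op_shift \<tau>0 \<xi>0 (\<lambda>\<xi>. complex_of_real a * trunc (l * R) f (l *\<^sub>R \<xi>)) z)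
      = lpnorm q (\<lambda>z. Ef (l * R) z + boost l (Ef (l * R)) z)"
      unfolding Ef_def boost_def a_def using in_Lp_measurable[OF in_Lp_trunc] q_gt_1 critical
      by (intro lpnorm_cong_nn_integral nn_integral_ext_op_pair_dilation l) auto
    moreover have "lpnorm q (\<lambda>z. Ef (l * R) z + boost l (Ef (l * R)) z) = ennreal (pair_norm l (l * R))"
      unfolding pair_norm_def boost_def using q_gt_1
      by (intro lpnorm_eq_Lp_norm in_Lp_add_galilean in_Lp_Ef) auto
    ultimately show ?thesis by simp
  qed
  have "((\<lambda>R. pair_norm l (l * R)) \<longlongrightarrow> Lim at_top (pair_norm l)) at_top"
    using tendsto_Lim_pair_norm filterlim_tendsto_pos_mult_at_top[OF tendsto_const l filterlim_ident]
    by (rule filterlim_compose)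
  then show ?thesis
    using pair_norm_dilation unfolding a_def by (intro ext_norm_eq_Lim) (simp add: tendsto_ennrealI)
qed

lemma pair_norm_le: "pair_norm l \<rho> \<le> 2 * Ef_norm \<rho>"
  unfolding pair_norm_def Ef_norm_def boost_def using q_gt_1
  by (intro Lp_norm_add_galilean_le in_Lp_Ef) auto

lemma eventually_pair_norm_gt:
  assumes c: "c < 2 * Ef_norm \<rho>"
  shows "eventually (\<lambda>l. c < pair_norm l \<rho>) (at_right 0)"
proof (rule sequentially_imp_eventually_at_right[OF zero_less_one])
  fix L :: "nat \<Rightarrow> real" assume L: "L \<longlonglongrightarrow> 0"
  have q: "1 \<le> q" using q_gt_1 by simp
  show "eventually (\<lambda>n. c < pair_norm (L n) \<rho>) sequentially"
    unfolding pair_norm_def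
  proof (rule Lp_norm_lower_semicontinuous)
    show "in_Lp q (\<lambda>z. Ef \<rho> z + boost (L n) (Ef \<rho>) z)" for n
      unfolding boost_def by (rule in_Lp_add_galilean[OF in_Lp_Ef q])
    show "in_Lp q (\<lambda>z. 2 * Ef \<rho> z)" using q by (intro in_Lp_cmult in_Lp_Ef) auto
    show "c < Lp_norm q (\<lambda>z. 2 * Ef \<rho> z)"
      using c Lp_norm_cmult[OF in_Lp_Ef[of \<rho>], where c = 2] q by (simp add: Ef_norm_def)
    have "((\<lambda>n. (L n)\<^sup>2 * ((norm \<xi>0)\<^sup>2 + \<tau>0)) \<longlongrightarrow> 0\<^sup>2 * ((norm \<xi>0)\<^sup>2 + \<tau>0)) sequentially"
      by (intro tendsto_intros L)
    moreover have "((\<lambda>n. (2 * L n) *\<^sub>R \<xi>0) \<longlongrightarrow> (2 * 0) *\<^sub>R \<xi>0) sequentially"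
      by (intro tendsto_intros L)
    ultimately have "((\<lambda>n. boost (L n) (Ef \<rho>) z) \<longlongrightarrow> Ef \<rho> z) sequentially" for z
      unfolding boost_def by (intro tendsto_galilean isCont_Ef) simp_all
    then show "(\<lambda>n. Ef \<rho> z + boost (L n) (Ef \<rho>) z) \<longlonglongrightarrow> 2 * Ef \<rho> z" for z
      unfolding mult_2 by (intro tendsto_add tendsto_const)
  qed (use q in simp)
qed

lemma tendsto_Lim_pair_norm_at_right:
  "((\<lambda>l. Lim at_top (pair_norm l)) \<longlongrightarrow> 2 * Lim at_top Ef_norm) (at_right 0)"
proof (rule tendstoI)
  fix e :: real assume e: "0 < e"
  obtain \<rho> where \<rho>: "A * tail_norm \<rho> < e / 8"
    using order_tendstoD(2)[OF tendsto_mult_right_zero[OF tail_norm_tendsto_0, of A], of "e / 8"] e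
    by (auto simp: eventually_at_top_linorder)
  show "eventually (\<lambda>l. dist (Lim at_top (pair_norm l)) (2 * Lim at_top Ef_norm) < e) (at_right 0)"
  proof (rule eventually_mono)
    show "eventually (\<lambda>l. 2 * Ef_norm \<rho> - e / 4 < pair_norm l \<rho>) (at_right 0)"
      using e by (intro eventually_pair_norm_gt) simp
  next
    fix l assume "2 * Ef_norm \<rho> - e / 4 < pair_norm l \<rho>"
    then show "dist (Lim at_top (pair_norm l)) (2 * Lim at_top Ef_norm) < e"
      using Lim_pair_norm_approx[of l \<rho>] Lim_Ef_norm_approx[of \<rho>] pair_norm_le[of l \<rho>] \<rho>
      unfolding dist_real_def by linarith
  qed
qed

end

theorem proposition2p2:
  fixes p p' q :: real and f :: "'a::euclidean_space \<Rightarrow> complex"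
    and \<tau>0 :: real and \<xi>0 :: 'a
  assumes p_gt1: "1 < p"
    and conj: "1 / p + 1 / p' = 1"
    and q_def: "q = (real DIM('a) + 2) / real DIM('a) * p'"
    and q_gt_p: "q > p"
    and A_fin: "A_const p q TYPE('a) < \<infinity>"
    and f_Lp: "in_Lp p f"
    and f_nz: "lpnorm p f \<noteq> 0"
    and extremizer: "ext_norm q ext_op f = A_const p q TYPE('a) * lpnorm p f"
  shows "((\<lambda>l. ext_norm q (\<lambda>g z. ext_op g z + ext_op_shift \<tau>0 \<xi>0 g z)
                 (\<lambda>\<xi>. complex_of_real (l powr (real DIM('a) / p)) * f (l *\<^sub>R \<xi>))
             / (ennreal (2 powr (1 / p)) * lpnorm p f))
          \<longlongrightarrow> ennreal (2 powr (1 / p')) * A_const p q TYPE('a)) (at_right 0)"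
proof -
  interpret extremizer p p' q f \<tau>0 \<xi>0
    by unfold_locales (fact assms)+
  define D where "D = 2 powr (1 / p) * Lp_norm p f"
  have D: "0 < D" "ennreal (2 powr (1 / p)) * lpnorm p f = ennreal D"
    unfolding D_def lpnorm_eq_Lp_norm[OF f_Lp] using Lp_norm_f_pos by (auto simp: ennreal_mult)
  have "1 / p' = 1 - 1 / p" using conj by simp
  then have "2 * Lim at_top Ef_norm / D = 2 powr (1 / p') * A"
    using Lp_norm_f_pos by (simp add: Lim_Ef_norm_eq D_def powr_diff)
  moreover have "((\<lambda>l. Lim at_top (pair_norm l) / D) \<longlongrightarrow> 2 * Lim at_top Ef_norm / D) (at_right 0)"
    using D(1) by (intro tendsto_divide tendsto_Lim_pair_norm_at_right tendsto_const) auto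
  ultimately have "((\<lambda>l. ennreal (Lim at_top (pair_norm l) / D)) \<longlongrightarrow> ennreal (2 powr (1 / p') * A)) (at_right 0)"
    by (simp add: tendsto_ennrealI)
  moreover have "eventually (\<lambda>l. ext_norm q (\<lambda>g z. ext_op g z + ext_op_shift \<tau>0 \<xi>0 g z)
        (\<lambda>\<xi>. complex_of_real (l powr (real DIM('a) / p)) * f (l *\<^sub>R \<xi>)) / (ennreal (2 powr (1 / p)) * lpnorm p f)
      = ennreal (Lim at_top (pair_norm l) / D)) (at_right 0)"
    using eventually_at_right_less[of "0::real"]
    by eventually_elim (simp add: ext_norm_dilation D divide_ennreal Lim_pair_norm_nonneg)
  ultimately show ?thesis
    using A_const_eq A_nonneg by (simp add: tendsto_cong ennreal_mult)
qed
end
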